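(* Let $\rho^\star\in\mathbb{R}^{n\times n}$ be an optimal solution of the SDP $\max_{\rho} \operatorname{tr}(C\rho)$ subject to $\rho \succeq 0$, $\rho_{ii} = 1/n$ for all $i\in[n]$, where $C\in\mathbb{R}^{n\times n}$ is a symmetric cost matrix with the block structure $C = \begin{pmatrix} 0 & B \\ B^T & 0 \end{pmatrix}$ for some $B\in\mathbb{R}^{n/2\times n/2}$. Let $\rho\in\mathbb{R}^{n\times n}$ be a positive semidefinite matrix with $\rho_{ii}>0$ for all $i$, and let $x\in \{-1,1\}^n$ be the vector obtained by applying the randomized rounding procedure to $\rho$, i.e. compute the symmetric matrix square root $\sqrt{\rho}$, sample $g_j \overset{\mathrm{iid}}{\sim} \mathcal{N}(0,1)$ for $j\in[n]$, and set $x_i = \operatorname{sgn}\big(\sum_j (\sqrt{\rho})_{ij} g_j\big)$ for $i\in[n]$. Let $\sigma\in\mathbb{R}^{n\times n}$ be the matrix with entries $\sigma_{ij}=\frac{\rho_{ij}}{n\sqrt{\rho_{ii}\rho_{jj}}}$. Then \[ \mathbb{E} \left[ x^T C x \right] \geq \frac2{\pi} n \operatorname{tr} (C\sigma) -\left(1 - \frac2{\pi} \right) n \operatorname{tr} (C \rho^\star). \]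
   Context: The expectation is over the Gaussian vector $g$ in the rounding procedure. *)

theory Defs
  imports "HOL-Probability.Probability"
begin

text \<open>Real n-by-n matrices are represented as functions nat => nat => real;
  only the entries with indices below n are relevant.\<close>

definition mat_psd :: "nat \<Rightarrow> (nat \<Rightarrow> nat \<Rightarrow> real) \<Rightarrow> bool" where
  "mat_psd n A \<longleftrightarrow> (\<forall>i<n. \<forall>j<n. A i j = A j i) \<and>
     (\<forall>v :: nat \<Rightarrow> real. 0 \<le> (\<Sum>i<n. \<Sum>j<n. v i * A i j * v j))"

definition mat_mult :: "nat \<Rightarrow> (nat \<Rightarrow> nat \<Rightarrow> real) \<Rightarrow> (nat \<Rightarrow> nat \<Rightarrow> real) \<Rightarrow> (nat \<Rightarrow> nat \<Rightarrow> real)" where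
  "mat_mult n A B = (\<lambda>i j. \<Sum>k<n. A i k * B k j)"

definition mat_trace_prod :: "nat \<Rightarrow> (nat \<Rightarrow> nat \<Rightarrow> real) \<Rightarrow> (nat \<Rightarrow> nat \<Rightarrow> real) \<Rightarrow> real" where
  "mat_trace_prod n A B = (\<Sum>i<n. \<Sum>j<n. A i j * B j i)"

text \<open>The symmetric positive semidefinite square root (entries outside the
  index range are normalised to 0 so that it is unique).\<close>
definition mat_sqrt :: "nat \<Rightarrow> (nat \<Rightarrow> nat \<Rightarrow> real) \<Rightarrow> (nat \<Rightarrow> nat \<Rightarrow> real)" where
  "mat_sqrt n A = (THE S. mat_psd n S \<and> (\<forall>i<n. \<forall>j<n. mat_mult n S S i j = A i j)
      \<and> (\<forall>i j. \<not> (i < n \<and> j < n) \<longrightarrow> S i j = 0))"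

definition sdp_feasible :: "nat \<Rightarrow> (nat \<Rightarrow> nat \<Rightarrow> real) \<Rightarrow> bool" where
  "sdp_feasible n R \<longleftrightarrow> mat_psd n R \<and> (\<forall>i<n. R i i = 1 / real n)"

definition sdp_optimal :: "nat \<Rightarrow> (nat \<Rightarrow> nat \<Rightarrow> real) \<Rightarrow> (nat \<Rightarrow> nat \<Rightarrow> real) \<Rightarrow> bool" where
  "sdp_optimal n C R \<longleftrightarrow> sdp_feasible n R \<and>
     (\<forall>R'. sdp_feasible n R' \<longrightarrow> mat_trace_prod n C R' \<le> mat_trace_prod n C R)"

definition rounding :: "nat \<Rightarrow> (nat \<Rightarrow> nat \<Rightarrow> real) \<Rightarrow> (nat \<Rightarrow> real) \<Rightarrow> nat \<Rightarrow> real" where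
  "rounding n R g i = sgn (\<Sum>j<n. mat_sqrt n R i j * g j)"

definition gauss_vec :: "nat \<Rightarrow> (nat \<Rightarrow> real) measure" where
  "gauss_vec n = PiM {..<n} (\<lambda>_. std_normal_distribution)"

end

(*
  Let S be the square root of rho, so that x_i = sgn (S_i . g) with S_i . S_j = rho_ij.
  Writing a sign as its L2-projection onto the Gaussian linear form plus a residual,
  sgn (S_i . g) = sqrt (2/pi) (S_i . g) / |S_i| + r_i, the residual r_i is uncorrelated
  with every linear form of g, whence
    E [x_i x_j] = 2/pi rho_ij / sqrt (rho_ii rho_jj) + K_ij,   K_ij = E [r_i r_j].
  K is positive semidefinite with K_ii <= 1 - 2/pi. Flipping the signs of one half of the
  coordinates and padding the diagonal turns K / ((1 - 2/pi) n) into a feasible point of the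
  SDP on which the objective of the bipartite cost C is -tr (C K) / ((1 - 2/pi) n); optimality
  of rho_star therefore gives tr (C K) >= -(1 - 2/pi) n tr (C rho_star).
*)

theory Submission
  imports Defs
begin

type_synonym real_mat = "nat \<Rightarrow> nat \<Rightarrow> real"

section \<open>Vectors and symmetric matrices\<close>

definition vec_dot :: "nat \<Rightarrow> (nat \<Rightarrow> real) \<Rightarrow> (nat \<Rightarrow> real) \<Rightarrow> real" where
  "vec_dot n u v = (\<Sum>j<n. u j * v j)"

definition mat_vec :: "nat \<Rightarrow> real_mat \<Rightarrow> (nat \<Rightarrow> real) \<Rightarrow> nat \<Rightarrow> real" where
  "mat_vec n A v = (\<lambda>i. vec_dot n (A i) v)"

definition quad_form :: "nat \<Rightarrow> real_mat \<Rightarrow> (nat \<Rightarrow> real) \<Rightarrow> real" where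
  "quad_form n A v = vec_dot n v (mat_vec n A v)"

definition mat_sym :: "nat \<Rightarrow> real_mat \<Rightarrow> bool" where
  "mat_sym n A \<longleftrightarrow> (\<forall>i<n. \<forall>j<n. A i j = A j i)"

definition mat_eq_on :: "nat \<Rightarrow> real_mat \<Rightarrow> real_mat \<Rightarrow> bool" where
  "mat_eq_on n A B \<longleftrightarrow> (\<forall>i<n. \<forall>j<n. A i j = B i j)"

definition mat_id :: real_mat where
  "mat_id i j = (if i = j then 1 else 0)"

lemma vec_dot_commute: "vec_dot n u v = vec_dot n v u"
  unfolding vec_dot_def by (simp add: mult.commute)

lemma vec_dot_cong:
  "(\<And>j. j < n \<Longrightarrow> u j = u' j) \<Longrightarrow> (\<And>j. j < n \<Longrightarrow> v j = v' j) \<Longrightarrow> vec_dot n u v = vec_dot n u' v'"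
  unfolding vec_dot_def by (intro sum.cong) auto

lemma vec_dot_self_nonneg: "0 \<le> vec_dot n v v"
  unfolding vec_dot_def by (simp add: sum_nonneg)

lemma vec_dot_self_eq_0_iff: "vec_dot n v v = 0 \<longleftrightarrow> (\<forall>j<n. v j = 0)"
  unfolding vec_dot_def by (subst sum_nonneg_eq_0_iff) auto

lemma mat_id_sym: "mat_id i j = mat_id j i"
  unfolding mat_id_def by simp

lemma vec_dot_mat_id: "k < n \<Longrightarrow> vec_dot n v (mat_id k) = v k"
  unfolding vec_dot_def mat_id_def by (simp add: if_distrib cong: if_cong)

lemma mat_vec_mat_id: "k < n \<Longrightarrow> mat_vec n A (mat_id k) i = A i k"
  unfolding mat_vec_def by (rule vec_dot_mat_id)

lemma mat_psd_iff: "mat_psd n A \<longleftrightarrow> mat_sym n A \<and> (\<forall>v. 0 \<le> quad_form n A v)"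
  unfolding mat_psd_def mat_sym_def quad_form_def mat_vec_def vec_dot_def
  by (simp add: sum_distrib_left mult.assoc)

lemma vec_dot_mat_vec_swap:
  assumes "mat_sym n A"
  shows "vec_dot n w (mat_vec n A v) = vec_dot n v (mat_vec n A w)"
proof -
  have "vec_dot n w (mat_vec n A v) = (\<Sum>i<n. \<Sum>j<n. w i * A i j * v j)"
    unfolding vec_dot_def mat_vec_def by (simp add: sum_distrib_left mult.assoc)
  also have "\<dots> = (\<Sum>j<n. \<Sum>i<n. w i * A i j * v j)"
    by (rule sum.swap)
  also have "\<dots> = vec_dot n v (mat_vec n A w)"
    using assms unfolding vec_dot_def mat_vec_def mat_sym_def
    by (intro sum.cong refl) (simp add: sum_distrib_left mult_ac)
  finally show ?thesis .
qed

lemma quad_form_add: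
  assumes "mat_sym n A"
  shows "quad_form n A (\<lambda>i. v i + t * w i)
    = quad_form n A v + 2 * t * vec_dot n w (mat_vec n A v) + t\<^sup>2 * quad_form n A w"
proof -
  have "quad_form n A (\<lambda>i. v i + t * w i) = quad_form n A v + t * vec_dot n w (mat_vec n A v)
      + t * vec_dot n v (mat_vec n A w) + t\<^sup>2 * quad_form n A w"
    unfolding quad_form_def mat_vec_def vec_dot_def
    by (simp add: algebra_simps sum.distrib sum_distrib_left power2_eq_square)
  then show ?thesis
    using vec_dot_mat_vec_swap[OF assms, of w v] by simp
qed

lemma quad_form_cong:
  "(\<And>j. j < n \<Longrightarrow> v j = v' j) \<Longrightarrow> mat_eq_on n A A' \<Longrightarrow> quad_form n A v = quad_form n A' v'"
  unfolding quad_form_def mat_vec_def mat_eq_on_def by (intro vec_dot_cong) auto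

lemma quad_form_scale: "quad_form n A (\<lambda>i. c * v i) = c\<^sup>2 * quad_form n A v"
  unfolding quad_form_def mat_vec_def vec_dot_def
  by (simp add: sum_distrib_left power2_eq_square mult_ac)

text \<open>With \<open>w = A v\<close>, positivity of the quadratic form at \<open>v + t w\<close> gives
  \<open>0 \<le> 2 t |w|\<^sup>2 + t\<^sup>2 w\<^sup>TAw\<close> for all \<open>t\<close>; a suitable negative \<open>t\<close> forces \<open>w = 0\<close>.\<close>
lemma psd_quad_form_eq_0_imp_mat_vec_eq_0:
  assumes psd: "mat_psd n A" and v: "quad_form n A v = 0"
  shows "\<forall>i<n. mat_vec n A v i = 0"
proof -
  define w where "w = mat_vec n A v"
  define b where "b = vec_dot n w w"
  define Q where "Q = quad_form n A w"
  have sym: "mat_sym n A" and Q: "0 \<le> Q" and b: "0 \<le> b"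
    using psd vec_dot_self_nonneg unfolding mat_psd_iff Q_def b_def by auto
  have "0 \<le> 2 * t * b + t\<^sup>2 * Q" for t
    using psd quad_form_add[OF sym, of v t w] v unfolding mat_psd_iff b_def Q_def w_def
    by (metis add_0)
  moreover have "2 * (- b / (Q + 1)) * b + (- b / (Q + 1))\<^sup>2 * Q = - (b\<^sup>2 * (Q + 2)) / (Q + 1)\<^sup>2"
    using Q by (simp add: power_divide field_simps power2_eq_square add_nonneg_eq_0_iff)
  ultimately have "0 \<le> - (b\<^sup>2 * (Q + 2)) / (Q + 1)\<^sup>2"
    by metis
  then have "b\<^sup>2 * (Q + 2) \<le> 0"
    using Q by (simp add: divide_le_0_iff)
  then have "b = 0"
    using Q by (smt (verit) mult_pos_pos zero_less_power2)
  then show ?thesis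
    unfolding b_def w_def vec_dot_self_eq_0_iff .
qed

lemma continuous_on_vec_dot_self: "continuous_on X (\<lambda>v. vec_dot n v v)"
  unfolding vec_dot_def
  by (intro continuous_intros continuous_on_compose2[OF continuous_on_product_coordinates]) auto

lemma continuous_on_quad_form: "continuous_on X (quad_form n A)"
  unfolding quad_form_def mat_vec_def vec_dot_def
  by (intro continuous_intros continuous_on_compose2[OF continuous_on_product_coordinates]) auto

lemma compact_unit_sphere: "compact {v :: nat \<Rightarrow> real. (\<forall>i\<ge>n. v i = 0) \<and> vec_dot n v v = 1}"
  (is "compact ?S")
proof -
  define P where "P = PiE UNIV (\<lambda>i::nat. if i < n then {-1..1::real} else {0})"
  have "compactin (product_topology (\<lambda>_. euclidean) UNIV) P"
    unfolding P_def by (subst compactin_PiE) auto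
  then have "compact P"
    by (simp add: euclidean_product_topology)
  moreover have "closed ?S"
  proof -
    have "closed {v :: nat \<Rightarrow> real. v i = 0}" for i
      by (intro closed_Collect_eq continuous_on_product_coordinates continuous_on_const)
    then have "closed {v :: nat \<Rightarrow> real. \<forall>i\<ge>n. v i = 0}"
      by (auto intro!: closed_Collect_all closed_Collect_imp)
    moreover have "closed {v :: nat \<Rightarrow> real. vec_dot n v v = 1}"
      by (intro closed_Collect_eq continuous_on_vec_dot_self continuous_on_const)
    ultimately show ?thesis
      by (simp add: Collect_conj_eq closed_Int)
  qed
  moreover have "?S \<subseteq> P"
  proof
    fix v :: "nat \<Rightarrow> real"
    assume v: "v \<in> ?S"
    have "\<bar>v i\<bar> \<le> 1" if "i < n" for i
    proof -
      have "(v i)\<^sup>2 \<le> vec_dot n v v"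
        unfolding vec_dot_def power2_eq_square
        by (rule member_le_sum) (use that in auto)
      then show ?thesis
        using v abs_le_square_iff[of "v i" 1] by simp
    qed
    then show "v \<in> P"
      using v unfolding P_def by (auto simp: abs_le_iff)
  qed
  ultimately show ?thesis
    using compact_Int_closed[of P ?S] by (simp add: Int_absorb1)
qed

lemma quad_form_max_on_unit_sphere:
  assumes "0 < n"
  obtains v where "vec_dot n v v = 1"
    and "\<And>w. quad_form n A w \<le> quad_form n A v * vec_dot n w w"
proof -
  define S where "S = {v :: nat \<Rightarrow> real. (\<forall>i\<ge>n. v i = 0) \<and> vec_dot n v v = 1}"
  have "mat_id 0 \<in> S"
    using assms vec_dot_mat_id[OF assms, of "mat_id 0"] unfolding S_def mat_id_def by auto
  then obtain v where "v \<in> S" and max: "\<forall>u\<in>S. quad_form n A u \<le> quad_form n A v"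
    using continuous_attains_sup[of S "quad_form n A"] compact_unit_sphere continuous_on_quad_form
    unfolding S_def by blast
  moreover have "quad_form n A w \<le> quad_form n A v * vec_dot n w w" for w
  proof (cases "vec_dot n w w = 0")
    case True
    then have "quad_form n A w = quad_form n A (\<lambda>_. 0)"
      by (intro quad_form_cong) (auto simp: vec_dot_self_eq_0_iff mat_eq_on_def)
    then show ?thesis
      using True by (simp add: quad_form_def vec_dot_def)
  next
    case False
    define s where "s = sqrt (vec_dot n w w)"
    have s: "0 < s" "s\<^sup>2 = vec_dot n w w"
      using False vec_dot_self_nonneg[of n w] unfolding s_def by auto
    define u where "u i = (if i < n then w i / s else 0)" for i
    have "vec_dot n u u = vec_dot n w w / s\<^sup>2"
      unfolding vec_dot_def u_def by (simp add: sum_divide_distrib power2_eq_square)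
    then have "u \<in> S"
      using s unfolding S_def u_def by auto
    moreover have "quad_form n A u = quad_form n A w / s\<^sup>2"
      using quad_form_scale[of n A "1 / s" w] by (subst quad_form_cong[of n u "\<lambda>i. 1 / s * w i"])
        (auto simp: u_def mat_eq_on_def power_divide)
    ultimately have "quad_form n A w / vec_dot n w w \<le> quad_form n A v"
      using max s by metis
    moreover have "0 < vec_dot n w w"
      using s by (metis zero_less_power2 less_irrefl)
    ultimately show ?thesis
      by (simp add: pos_divide_le_eq)
  qed
  ultimately show ?thesis
    using that unfolding S_def by blast
qed

lemma rayleigh_maximizer_is_eigenvector:
  assumes sym: "mat_sym n A" and v: "vec_dot n v v = 1"
    and max: "\<And>w. quad_form n A w \<le> quad_form n A v * vec_dot n w w"
  shows "\<forall>i<n. mat_vec n A v i = quad_form n A v * v i"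
proof -
  define l where "l = quad_form n A v"
  define B where "B i j = l * mat_id i j - A i j" for i j
  have mat_vec_B: "mat_vec n B u i = l * u i - mat_vec n A u i" if "i < n" for u i
  proof -
    have "mat_vec n B u i = l * vec_dot n u (mat_id i) - mat_vec n A u i"
      unfolding mat_vec_def vec_dot_def B_def
      by (simp add: algebra_simps sum_subtractf sum_distrib_left)
    then show ?thesis
      using vec_dot_mat_id[OF that] by simp
  qed
  have quad_B: "quad_form n B u = l * vec_dot n u u - quad_form n A u" for u
  proof -
    have "quad_form n B u = vec_dot n u (\<lambda>i. l * u i - mat_vec n A u i)"
      unfolding quad_form_def by (intro vec_dot_cong) (auto simp: mat_vec_B)
    then show ?thesis
      unfolding quad_form_def vec_dot_def
      by (simp add: algebra_simps sum_subtractf sum_distrib_left)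
  qed
  have "mat_psd n B"
    unfolding mat_psd_iff using sym max
    by (auto simp: mat_sym_def B_def mat_id_def quad_B l_def)
  then have "\<forall>i<n. mat_vec n B v i = 0"
    by (rule psd_quad_form_eq_0_imp_mat_vec_eq_0) (simp add: quad_B v l_def)
  then show ?thesis
    by (simp add: mat_vec_B l_def)
qed

lemma mat_eq_on_refl [simp]: "mat_eq_on n A A"
  unfolding mat_eq_on_def by simp

lemma mat_eq_on_trans [trans]: "mat_eq_on n A B \<Longrightarrow> mat_eq_on n B C \<Longrightarrow> mat_eq_on n A C"
  unfolding mat_eq_on_def by auto

lemma mat_mult_eq_vec_dot: "mat_mult n A B i j = vec_dot n (A i) (\<lambda>k. B k j)"
  unfolding mat_mult_def vec_dot_def ..

lemma mat_mult_assoc: "mat_mult n (mat_mult n X Y) Z = mat_mult n X (mat_mult n Y Z)"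
proof (intro ext)
  fix i j
  have "mat_mult n (mat_mult n X Y) Z i j = (\<Sum>k<n. \<Sum>l<n. X i l * Y l k * Z k j)"
    unfolding mat_mult_def by (simp add: sum_distrib_right)
  also have "\<dots> = (\<Sum>l<n. \<Sum>k<n. X i l * Y l k * Z k j)"
    by (rule sum.swap)
  also have "\<dots> = mat_mult n X (mat_mult n Y Z) i j"
    unfolding mat_mult_def by (simp add: sum_distrib_left mult.assoc)
  finally show "mat_mult n (mat_mult n X Y) Z i j = mat_mult n X (mat_mult n Y Z) i j" .
qed

lemma mat_mult_id_left: "mat_eq_on n (mat_mult n mat_id X) X"
  unfolding mat_eq_on_def mat_mult_eq_vec_dot
  by (simp add: vec_dot_commute[of n "mat_id _"] vec_dot_mat_id)

lemma mat_mult_id_right: "mat_eq_on n (mat_mult n X mat_id) X"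
proof -
  have "(\<lambda>k. mat_id k j) = mat_id j" for j
    by (simp add: fun_eq_iff mat_id_sym)
  then show ?thesis
    unfolding mat_eq_on_def mat_mult_eq_vec_dot by (simp add: vec_dot_mat_id)
qed

lemma mat_mult_cong:
  "mat_eq_on n X X' \<Longrightarrow> mat_eq_on n Y Y' \<Longrightarrow> mat_eq_on n (mat_mult n X Y) (mat_mult n X' Y')"
  unfolding mat_eq_on_def mat_mult_eq_vec_dot
  by (intro allI impI vec_dot_cong) simp_all

lemma mat_vec_mat_mult: "mat_vec n (mat_mult n P Q) x = mat_vec n P (mat_vec n Q x)"
proof (intro ext)
  fix i
  have "mat_vec n (mat_mult n P Q) x i = (\<Sum>j<n. \<Sum>k<n. P i k * Q k j * x j)"
    unfolding mat_vec_def vec_dot_def mat_mult_def by (simp add: sum_distrib_right)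
  also have "\<dots> = (\<Sum>k<n. \<Sum>j<n. P i k * Q k j * x j)"
    by (rule sum.swap)
  also have "\<dots> = mat_vec n P (mat_vec n Q x) i"
    unfolding mat_vec_def vec_dot_def by (simp add: sum_distrib_left mult.assoc)
  finally show "mat_vec n (mat_mult n P Q) x i = mat_vec n P (mat_vec n Q x) i" .
qed

lemma mat_sym_conj:
  assumes H: "mat_sym n H" and X: "mat_sym n X"
  shows "mat_sym n (mat_mult n (mat_mult n H X) H)"
proof -
  have expand: "mat_mult n (mat_mult n H X) H i j = (\<Sum>k<n. \<Sum>l<n. H i l * X l k * H k j)" for i j
    unfolding mat_mult_def by (simp add: sum_distrib_right)
  have "(\<Sum>k<n. \<Sum>l<n. H i l * X l k * H k j) = (\<Sum>k<n. \<Sum>l<n. H j l * X l k * H k i)"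
    if "i < n" "j < n" for i j
  proof -
    have "(\<Sum>k<n. \<Sum>l<n. H i l * X l k * H k j) = (\<Sum>l<n. \<Sum>k<n. H i l * X l k * H k j)"
      by (rule sum.swap)
    also have "\<dots> = (\<Sum>l<n. \<Sum>k<n. H j k * X k l * H l i)"
      using H X that unfolding mat_sym_def by (intro sum.cong refl) (simp add: mult_ac)
    finally show ?thesis .
  qed
  then show ?thesis
    unfolding mat_sym_def expand by blast
qed

lemma quad_form_conj:
  assumes "mat_sym n H"
  shows "quad_form n (mat_mult n (mat_mult n H X) H) x = quad_form n X (mat_vec n H x)"
  unfolding quad_form_def mat_vec_mat_mult
  by (subst vec_dot_mat_vec_swap[OF assms]) (rule vec_dot_commute)

lemma mat_psd_conj: "mat_sym n H \<Longrightarrow> mat_psd n X \<Longrightarrow> mat_psd n (mat_mult n (mat_mult n H X) H)"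
  unfolding mat_psd_iff by (simp add: mat_sym_conj quad_form_conj)

section \<open>Square roots of positive semidefinite matrices\<close>

definition sym_involution :: "nat \<Rightarrow> real_mat \<Rightarrow> bool" where
  "sym_involution n H \<longleftrightarrow> mat_sym n H \<and> mat_eq_on n (mat_mult n H H) mat_id"

text \<open>The Householder reflection \<open>I - c w w\<^sup>T\<close>, \<open>w = e\<^sub>m - v\<close>, \<open>c = 2 / |w|\<^sup>2\<close>, swaps
  \<open>e\<^sub>m\<close> and \<open>v\<close>; taking \<open>c = 0\<close> when \<open>v = e\<^sub>m\<close> makes it the identity in that case.\<close>
lemma householder_reflection_exists:
  assumes m: "m < n" and v: "vec_dot n v v = 1"
  shows "\<exists>H. sym_involution n H \<and> (\<forall>i<n. H i m = v i)"
proof -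
  define w where "w i = mat_id m i - v i" for i
  define d where "d = vec_dot n w w"
  define c where "c = (if d = 0 then 0 else 2 / d)"
  define H where "H i j = mat_id i j - c * w i * w j" for i j
  have "d = vec_dot n (mat_id m) (mat_id m) - 2 * vec_dot n v (mat_id m) + vec_dot n v v"
    unfolding d_def w_def vec_dot_def
    by (simp add: algebra_simps sum_subtractf sum.distrib sum_distrib_left)
  then have d: "d = 2 * w m"
    using m v by (simp add: vec_dot_mat_id w_def mat_id_def)
  have ccd: "c * c * d = 2 * c"
    unfolding c_def by simp
  have cw: "c * w m * w i = w i" if "i < n" for i
  proof (cases "d = 0")
    case True
    then show ?thesis
      using that unfolding d_def vec_dot_self_eq_0_iff by simp
  next
    case False
    then show ?thesis
      unfolding c_def d by simp
  qed
  have row: "vec_dot n (mat_id i) u = u i" if "i < n" for i u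
    using vec_dot_mat_id[OF that] vec_dot_commute by metis
  have "mat_mult n H H i j = mat_id i j" if i: "i < n" and j: "j < n" for i j
  proof -
    have "mat_mult n H H i j = vec_dot n (mat_id i) (mat_id j) - c * w j * vec_dot n (mat_id i) w
        - c * w i * vec_dot n w (mat_id j) + c * c * w i * w j * d"
      unfolding mat_mult_eq_vec_dot H_def d_def vec_dot_def
      by (simp add: mat_id_sym[of _ j] algebra_simps sum_subtractf sum.distrib sum_distrib_left)
    also have "\<dots> = mat_id i j"
      using i j ccd by (simp add: row vec_dot_mat_id algebra_simps) blast
    finally show ?thesis .
  qed
  moreover have "mat_sym n H"
    unfolding mat_sym_def H_def by (simp add: mat_id_sym mult_ac)
  moreover have "H i m = v i" if "i < n" for i
  proof -
    have "H i m = mat_id i m - c * w m * w i"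
      unfolding H_def by (simp add: mult_ac)
    then show ?thesis
      unfolding cw[OF that] by (simp add: w_def mat_id_sym)
  qed
  ultimately show ?thesis
    unfolding sym_involution_def mat_eq_on_def by blast
qed

lemma mat_psd_Suc_restrict:
  assumes "mat_psd (Suc m) B"
  shows "mat_psd m B"
  unfolding mat_psd_def
proof (intro conjI allI impI)
  show "B i j = B j i" if "i < m" "j < m" for i j
    using assms that unfolding mat_psd_def by simp
  fix x :: "nat \<Rightarrow> real"
  have "(\<Sum>i<m. \<Sum>j<m. x i * B i j * x j)
      = (\<Sum>i<Suc m. \<Sum>j<Suc m. (x(m := 0)) i * B i j * (x(m := 0)) j)"
    by (auto intro!: sum.cong)
  also have "\<dots> \<ge> 0"
    using assms unfolding mat_psd_def by blast
  finally show "0 \<le> (\<Sum>i<m. \<Sum>j<m. x i * B i j * x j)" .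
qed

definition mat_append_diag :: "nat \<Rightarrow> real_mat \<Rightarrow> real \<Rightarrow> real_mat" where
  "mat_append_diag m T c i j = (if i < m \<and> j < m then T i j else if i = m \<and> j = m then c else 0)"

lemma mat_psd_append_diag:
  assumes T: "mat_psd m T" and c: "0 \<le> c"
  shows "mat_psd (Suc m) (mat_append_diag m T c)"
  unfolding mat_psd_def
proof (intro conjI allI impI)
  let ?T = "mat_append_diag m T c"
  show "?T i j = ?T j i" if "i < Suc m" "j < Suc m" for i j
    using T that unfolding mat_append_diag_def mat_psd_def by auto
  fix x :: "nat \<Rightarrow> real"
  have "(\<Sum>i<Suc m. \<Sum>j<Suc m. x i * ?T i j * x j) = (\<Sum>i<m. \<Sum>j<m. x i * ?T i j * x j)
      + (\<Sum>i<m. x i * ?T i m * x m) + (\<Sum>j<m. x m * ?T m j * x j) + x m * ?T m m * x m"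
    by (simp add: sum.distrib)
  also have "(\<Sum>i<m. \<Sum>j<m. x i * ?T i j * x j) = (\<Sum>i<m. \<Sum>j<m. x i * T i j * x j)"
    by (intro sum.cong refl) (simp add: mat_append_diag_def)
  finally have "(\<Sum>i<Suc m. \<Sum>j<Suc m. x i * ?T i j * x j)
      = (\<Sum>i<m. \<Sum>j<m. x i * T i j * x j) + c * (x m)\<^sup>2"
    by (simp add: mat_append_diag_def power2_eq_square)
  then show "0 \<le> (\<Sum>i<Suc m. \<Sum>j<Suc m. x i * ?T i j * x j)"
    using T c unfolding mat_psd_def by simp
qed

lemma psd_sqrt_extend_Suc:
  assumes B: "mat_psd (Suc m) B" and col: "\<forall>i<Suc m. B i m = l * mat_id i m" and l: "0 \<le> l"
    and T: "mat_psd m T" and sq: "mat_eq_on m (mat_mult m T T) B"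
  shows "\<exists>T'. mat_psd (Suc m) T' \<and> mat_eq_on (Suc m) (mat_mult (Suc m) T' T') B"
proof -
  define T' where "T' = mat_append_diag m T (sqrt l)"
  have last: "B i j = l * mat_id i j" if "i < Suc m" "j < Suc m" "i = m \<or> j = m" for i j
  proof (cases "j = m")
    case True
    then show ?thesis
      using col that by simp
  next
    case False
    then have "B i j = B j i" "i = m"
      using B that unfolding mat_psd_def by auto
    then show ?thesis
      using col that by (simp add: mat_id_sym)
  qed
  have "mat_mult (Suc m) T' T' i j = B i j" if i: "i < Suc m" and j: "j < Suc m" for i j
  proof -
    have split: "mat_mult (Suc m) T' T' i j = mat_mult m T' T' i j + T' i m * T' m j"
      unfolding mat_mult_def by simp
    consider "i < m" "j < m" | "i = m \<or> j = m"
      using i j by linarith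
    then show ?thesis
    proof cases
      case 1
      have "mat_mult m T' T' i j = mat_mult m T T i j"
        unfolding mat_mult_def using 1 by (intro sum.cong) (simp_all add: T'_def mat_append_diag_def)
      then show ?thesis
        using split 1 sq unfolding mat_eq_on_def by (simp add: T'_def mat_append_diag_def)
    next
      case 2
      have "mat_mult m T' T' i j = 0"
        unfolding mat_mult_def using 2 by (intro sum.neutral) (auto simp: T'_def mat_append_diag_def)
      moreover have "T' i m * T' m j = l * mat_id i j"
        using 2 i j l by (auto simp: T'_def mat_append_diag_def mat_id_def)
      ultimately show ?thesis
        using split last[OF i j 2] by simp
    qed
  qed
  then show ?thesis
    using mat_psd_append_diag[OF T real_sqrt_ge_zero[OF l]] unfolding T'_def mat_eq_on_def by blast
qed

lemma householder_conj_column: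
  assumes H: "sym_involution n H" and m: "m < n" and Hm: "\<forall>i<n. H i m = v i"
    and ev: "\<forall>i<n. mat_vec n A v i = l * v i"
  shows "\<forall>i<n. mat_mult n (mat_mult n H A) H i m = l * mat_id i m"
proof (intro allI impI)
  fix i
  assume i: "i < n"
  have "mat_mult n (mat_mult n H A) H i m = mat_vec n (mat_mult n H A) (\<lambda>k. H k m) i"
    unfolding mat_mult_eq_vec_dot mat_vec_def ..
  also have "\<dots> = mat_vec n H (mat_vec n A v) i"
  proof -
    have "mat_vec n (mat_mult n H A) (\<lambda>k. H k m) = mat_vec n (mat_mult n H A) v"
      unfolding mat_vec_def using Hm by (intro ext vec_dot_cong) simp_all
    then show ?thesis
      by (simp add: mat_vec_mat_mult)
  qed
  also have "\<dots> = l * mat_mult n H H i m"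
    using ev Hm unfolding mat_vec_def mat_mult_eq_vec_dot vec_dot_def
    by (simp add: sum_distrib_left mult_ac)
  also have "\<dots> = l * mat_id i m"
    using H i m unfolding sym_involution_def mat_eq_on_def by simp
  finally show "mat_mult n (mat_mult n H A) H i m = l * mat_id i m" .
qed

lemma psd_sqrt_conj:
  assumes H: "sym_involution n H" and T: "mat_psd n T"
    and sq: "mat_eq_on n (mat_mult n T T) (mat_mult n (mat_mult n H A) H)"
  defines "S \<equiv> mat_mult n (mat_mult n H T) H"
  shows "mat_psd n S \<and> mat_eq_on n (mat_mult n S S) A"
proof
  have sym: "mat_sym n H" and HH: "mat_eq_on n (mat_mult n H H) mat_id"
    using H unfolding sym_involution_def by auto
  show "mat_psd n S"
    unfolding S_def by (rule mat_psd_conj[OF sym T])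
  have "mat_eq_on n (mat_mult n S S) (mat_mult n H (mat_mult n T (mat_mult n (mat_mult n H H) (mat_mult n T H))))"
    unfolding S_def mat_mult_assoc by simp
  also have "mat_eq_on n \<dots> (mat_mult n H (mat_mult n T (mat_mult n mat_id (mat_mult n T H))))"
    by (rule mat_mult_cong[OF mat_eq_on_refl mat_mult_cong[OF mat_eq_on_refl
          mat_mult_cong[OF HH mat_eq_on_refl]]])
  also have "mat_eq_on n \<dots> (mat_mult n H (mat_mult n (mat_mult n T T) H))"
    unfolding mat_mult_assoc[of n T T H]
    by (rule mat_mult_cong[OF mat_eq_on_refl mat_mult_cong[OF mat_eq_on_refl mat_mult_id_left]])
  also have "mat_eq_on n \<dots> (mat_mult n H (mat_mult n (mat_mult n (mat_mult n H A) H) H))"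
    by (rule mat_mult_cong[OF mat_eq_on_refl mat_mult_cong[OF sq mat_eq_on_refl]])
  also have "mat_eq_on n \<dots> (mat_mult n (mat_mult n H H) (mat_mult n A (mat_mult n H H)))"
    unfolding mat_mult_assoc by simp
  also have "mat_eq_on n \<dots> (mat_mult n mat_id (mat_mult n A mat_id))"
    by (rule mat_mult_cong[OF HH mat_mult_cong[OF mat_eq_on_refl HH]])
  also have "mat_eq_on n \<dots> A"
    by (rule mat_eq_on_trans[OF mat_mult_id_left mat_mult_id_right])
  finally show "mat_eq_on n (mat_mult n S S) A" .
qed

text \<open>Deflation: conjugating by a Householder reflection that maps \<open>e\<^sub>m\<close> to a top eigenvector
  turns the last row and column into \<open>l e\<^sub>m\<close>; take the root of the leading block by induction,
  append \<open>sqrt l\<close> and conjugate back.\<close>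
lemma psd_sqrt_exists: "mat_psd n A \<Longrightarrow> \<exists>S. mat_psd n S \<and> mat_eq_on n (mat_mult n S S) A"
proof (induction n arbitrary: A)
  case 0
  then show ?case
    unfolding mat_eq_on_def by blast
next
  case (Suc m)
  have sym: "mat_sym (Suc m) A"
    using Suc.prems unfolding mat_psd_iff by simp
  obtain v where v: "vec_dot (Suc m) v v = 1"
    and max: "\<And>w. quad_form (Suc m) A w \<le> quad_form (Suc m) A v * vec_dot (Suc m) w w"
    using quad_form_max_on_unit_sphere[of "Suc m" A] by auto
  define l where "l = quad_form (Suc m) A v"
  have l: "0 \<le> l"
    using Suc.prems unfolding mat_psd_iff l_def by simp
  have ev: "\<forall>i<Suc m. mat_vec (Suc m) A v i = l * v i"
    using rayleigh_maximizer_is_eigenvector[OF sym v max] unfolding l_def .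
  obtain H where H: "sym_involution (Suc m) H" and Hm: "\<forall>i<Suc m. H i m = v i"
    using householder_reflection_exists[of m "Suc m" v] v by auto
  define B where "B = mat_mult (Suc m) (mat_mult (Suc m) H A) H"
  have B: "mat_psd (Suc m) B"
    using H Suc.prems unfolding B_def sym_involution_def by (simp add: mat_psd_conj)
  obtain T' where "mat_psd m T'" "mat_eq_on m (mat_mult m T' T') B"
    using Suc.IH[OF mat_psd_Suc_restrict[OF B]] by blast
  then obtain T where "mat_psd (Suc m) T" "mat_eq_on (Suc m) (mat_mult (Suc m) T T) B"
    using psd_sqrt_extend_Suc[OF B _ l] householder_conj_column[OF H lessI Hm ev]
    unfolding B_def by blast
  then show ?case
    using psd_sqrt_conj[OF H] unfolding B_def by blast
qed

lemma quad_form_pos_eigenpair: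
  assumes sym: "mat_sym n D" and x: "0 < quad_form n D x"
  shows "\<exists>v l. 0 < l \<and> vec_dot n v v = 1 \<and> (\<forall>i<n. mat_vec n D v i = l * v i)"
proof -
  have "0 < n"
    using x by (cases n) (auto simp: quad_form_def vec_dot_def)
  then obtain v where v: "vec_dot n v v = 1"
    and max: "\<And>w. quad_form n D w \<le> quad_form n D v * vec_dot n w w"
    using quad_form_max_on_unit_sphere by blast
  have "0 < quad_form n D v"
    using max[of x] x vec_dot_self_nonneg[of n x] by (smt (verit) mult_nonpos_nonneg)
  then show ?thesis
    using rayleigh_maximizer_is_eigenvector[OF sym v max] v by blast
qed

lemma sym_nonzero_eigenpair:
  assumes sym: "mat_sym n D" and nonzero: "\<not> mat_eq_on n D (\<lambda>_ _. 0)"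
  shows "\<exists>v l. l \<noteq> 0 \<and> vec_dot n v v = 1 \<and> (\<forall>i<n. mat_vec n D v i = l * v i)"
proof -
  have "\<exists>x. quad_form n D x \<noteq> 0"
  proof (rule ccontr)
    assume zero: "\<not> (\<exists>x. quad_form n D x \<noteq> 0)"
    then have "mat_psd n D"
      using sym unfolding mat_psd_iff by simp
    then have "D i j = 0" if "i < n" "j < n" for i j
      using psd_quad_form_eq_0_imp_mat_vec_eq_0[of n D "mat_id j"] zero mat_vec_mat_id that by auto
    then show False
      using nonzero unfolding mat_eq_on_def by auto
  qed
  then obtain x where x: "quad_form n D x \<noteq> 0"
    by blast
  show ?thesis
  proof (cases "0 < quad_form n D x")
    case True
    then obtain v l where "0 < l" "vec_dot n v v = 1" "\<forall>i<n. mat_vec n D v i = l * v i"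
      using quad_form_pos_eigenpair[OF sym] by blast
    then show ?thesis
      by (intro exI[of _ v] exI[of _ l]) auto
  next
    case False
    define E where "E i j = - D i j" for i j
    have mat_vec_E: "mat_vec n E u = (\<lambda>i. - mat_vec n D u i)" for u
      unfolding E_def mat_vec_def vec_dot_def by (simp add: sum_negf)
    have "mat_sym n E" "0 < quad_form n E x"
      using sym x False unfolding E_def mat_sym_def quad_form_def mat_vec_E
      by (auto simp: vec_dot_def sum_negf)
    then obtain v l where "0 < l" "vec_dot n v v = 1" "\<forall>i<n. mat_vec n E v i = l * v i"
      using quad_form_pos_eigenpair by blast
    then show ?thesis
      unfolding mat_vec_E by (intro exI[of _ v] exI[of _ "- l"]) auto
  qed
qed

lemma quad_form_mat_mult_self:
  "mat_sym n S \<Longrightarrow> quad_form n (mat_mult n S S) v = vec_dot n (mat_vec n S v) (mat_vec n S v)"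
  unfolding quad_form_def mat_vec_mat_mult by (rule vec_dot_mat_vec_swap)

text \<open>An eigenvector \<open>v\<close> of \<open>S - T\<close> with eigenvalue \<open>l \<noteq> 0\<close> gives
  \<open>0 = |Sv|\<^sup>2 - |Tv|\<^sup>2 = l (v\<^sup>TSv + v\<^sup>TTv)\<close>, so \<open>Sv = Tv = 0\<close> and hence \<open>lv = 0\<close>.\<close>
lemma psd_sqrt_unique:
  assumes S: "mat_psd n S" and T: "mat_psd n T"
    and eq: "mat_eq_on n (mat_mult n S S) (mat_mult n T T)"
  shows "mat_eq_on n S T"
proof (rule ccontr)
  assume ne: "\<not> mat_eq_on n S T"
  define D where "D i j = S i j - T i j" for i j
  have symS: "mat_sym n S" and symT: "mat_sym n T"
    using S T unfolding mat_psd_iff by auto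
  have "mat_sym n D" "\<not> mat_eq_on n D (\<lambda>_ _. 0)"
    using symS symT ne unfolding D_def mat_sym_def mat_eq_on_def by auto
  then obtain v l where l: "l \<noteq> 0" and v: "vec_dot n v v = 1"
    and ev: "\<forall>i<n. mat_vec n D v i = l * v i"
    using sym_nonzero_eigenpair by blast
  define a where "a = mat_vec n S v"
  define b where "b = mat_vec n T v"
  have mat_vec_D: "mat_vec n D v i = a i - b i" for i
    unfolding a_def b_def mat_vec_def vec_dot_def D_def by (simp add: left_diff_distrib sum_subtractf)
  have "vec_dot n a a = vec_dot n b b"
    using quad_form_cong[OF _ eq, of v v] unfolding a_def b_def
    by (simp add: quad_form_mat_mult_self symS symT)
  then have "0 = vec_dot n (\<lambda>i. a i - b i) (\<lambda>i. a i + b i)"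
    unfolding vec_dot_def by (simp add: algebra_simps sum_subtractf sum.distrib)
  also have "\<dots> = vec_dot n (\<lambda>i. l * v i) (\<lambda>i. a i + b i)"
    using ev by (intro vec_dot_cong) (simp_all add: mat_vec_D)
  also have "\<dots> = l * (quad_form n S v + quad_form n T v)"
    unfolding quad_form_def vec_dot_def a_def b_def
    by (simp add: sum_distrib_left algebra_simps sum.distrib)
  finally have "quad_form n S v + quad_form n T v = 0"
    using l by simp
  moreover have "0 \<le> quad_form n S v" "0 \<le> quad_form n T v"
    using S T unfolding mat_psd_iff by auto
  ultimately have "\<forall>i<n. a i = 0" "\<forall>i<n. b i = 0"
    unfolding a_def b_def using psd_quad_form_eq_0_imp_mat_vec_eq_0 S T by auto
  then have "\<forall>i<n. v i = 0"
    using ev l by (simp add: mat_vec_D)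
  then show False
    using v vec_dot_self_eq_0_iff[of n v] by simp
qed

lemma
  assumes "mat_psd n A"
  shows mat_psd_mat_sqrt: "mat_psd n (mat_sqrt n A)"
    and mat_sqrt_mult_self: "mat_eq_on n (mat_mult n (mat_sqrt n A) (mat_sqrt n A)) A"
proof -
  define P where "P S \<longleftrightarrow> mat_psd n S \<and> (\<forall>i<n. \<forall>j<n. mat_mult n S S i j = A i j)
      \<and> (\<forall>i j. \<not> (i < n \<and> j < n) \<longrightarrow> S i j = 0)" for S
  obtain S where S: "mat_psd n S" and SS: "mat_eq_on n (mat_mult n S S) A"
    using psd_sqrt_exists[OF assms] by blast
  define S0 where "S0 i j = (if i < n \<and> j < n then S i j else 0)" for i j
  have S0: "mat_eq_on n S0 S"
    unfolding mat_eq_on_def S0_def by simp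
  have "mat_eq_on n (mat_mult n S0 S0) A"
    by (rule mat_eq_on_trans[OF mat_mult_cong[OF S0 S0] SS])
  moreover have "mat_psd n S0"
    using S unfolding mat_psd_def S0_def by simp
  ultimately have "P S0"
    unfolding P_def mat_eq_on_def S0_def by simp
  moreover have "S1 = S2" if "P S1" "P S2" for S1 S2
  proof (intro ext)
    fix i j
    have "mat_psd n S1" "mat_psd n S2" "mat_eq_on n (mat_mult n S1 S1) (mat_mult n S2 S2)"
      using that unfolding P_def mat_eq_on_def by auto
    then have "mat_eq_on n S1 S2"
      by (rule psd_sqrt_unique)
    then show "S1 i j = S2 i j"
      using that unfolding P_def mat_eq_on_def by (cases "i < n \<and> j < n") auto
  qed
  ultimately have "\<exists>!S. P S"
    by blast
  then have "P (THE S. P S)"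
    by (rule theI')
  moreover have "(THE S. P S) = mat_sqrt n A"
    by (simp add: mat_sqrt_def P_def)
  ultimately show "mat_psd n (mat_sqrt n A)" "mat_eq_on n (mat_mult n (mat_sqrt n A) (mat_sqrt n A)) A"
    unfolding P_def mat_eq_on_def by auto
qed

lemma vec_dot_mat_sqrt_rows:
  assumes "mat_psd n A" "i < n" "j < n"
  shows "vec_dot n (mat_sqrt n A i) (mat_sqrt n A j) = A i j"
proof -
  have "vec_dot n (mat_sqrt n A i) (mat_sqrt n A j) = mat_mult n (mat_sqrt n A) (mat_sqrt n A) i j"
    using mat_psd_mat_sqrt[OF assms(1)] assms(3)
    unfolding mat_mult_eq_vec_dot mat_psd_iff mat_sym_def by (intro vec_dot_cong) auto
  then show ?thesis
    using mat_sqrt_mult_self[OF assms(1)] assms unfolding mat_eq_on_def by simp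
qed

section \<open>Linear forms of a standard Gaussian vector\<close>

lemma prob_space_gauss_vec: "prob_space (gauss_vec n)"
  unfolding gauss_vec_def by (intro prob_space_PiM) (simp add: prob_space_normal_density)

lemma sets_gauss_vec: "sets (gauss_vec n) = sets (PiM {..<n} (\<lambda>_. borel))"
  unfolding gauss_vec_def by (intro sets_PiM_cong) auto

lemma measurable_gauss_vec_component [measurable]:
  "k < n \<Longrightarrow> (\<lambda>g. g k) \<in> borel_measurable (gauss_vec n)"
  using measurable_component_singleton[of k "{..<n}" "\<lambda>_. borel"]
  by (simp add: measurable_cong_sets[OF sets_gauss_vec refl])

lemma borel_measurable_vec_dot_gauss_vec [measurable]:
  "vec_dot n a \<in> borel_measurable (gauss_vec n)"
  unfolding vec_dot_def by (intro borel_measurable_sum borel_measurable_times) auto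

lemma distr_gauss_vec_component:
  assumes "k < n"
  shows "distr (gauss_vec n) borel (\<lambda>g. g k) = std_normal_distribution"
proof -
  have "distr (gauss_vec n) borel (\<lambda>g. g k) = distr (gauss_vec n) std_normal_distribution (\<lambda>g. g k)"
    by (rule distr_cong) auto
  also have "\<dots> = std_normal_distribution"
    unfolding gauss_vec_def
    by (rule distr_PiM_component) (auto simp: assms prob_space_normal_density)
  finally show ?thesis .
qed

lemma distributed_gauss_vec_component:
  assumes "k < n"
  shows "distributed (gauss_vec n) lborel (\<lambda>g. g k) std_normal_density"
proof -
  have "distr (gauss_vec n) lborel (\<lambda>g. g k) = distr (gauss_vec n) borel (\<lambda>g. g k)"
    by (rule distr_cong) auto
  then show ?thesis
    using assms unfolding distributed_def distr_gauss_vec_component[OF assms] by simp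
qed

lemma indep_vars_gauss_vec_components:
  assumes "0 < n"
  shows "prob_space.indep_vars (gauss_vec n) (\<lambda>_. borel) (\<lambda>k g. g k) {..<n}"
proof -
  interpret prob_space "gauss_vec n"
    by (rule prob_space_gauss_vec)
  have "distr (gauss_vec n) (PiM {..<n} (\<lambda>_. borel)) (\<lambda>g. \<lambda>i\<in>{..<n}. g i)
      = distr (gauss_vec n) (PiM {..<n} (\<lambda>_. borel)) (\<lambda>g. g)"
    by (rule distr_cong) (auto simp: gauss_vec_def space_PiM PiE_def extensional_def fun_eq_iff)
  also have "\<dots> = gauss_vec n"
    by (rule distr_id2) (simp add: sets_gauss_vec)
  also have "\<dots> = PiM {..<n} (\<lambda>i. distr (gauss_vec n) borel (\<lambda>g. g i))"
    unfolding gauss_vec_def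
    by (rule PiM_cong) (auto simp: distr_gauss_vec_component[unfolded gauss_vec_def])
  finally show ?thesis
    using assms by (subst indep_vars_iff_distr_eq_PiM') auto
qed

lemma vec_dot_eq_0_if_self_eq_0: "vec_dot n a a = 0 \<Longrightarrow> vec_dot n a b = 0"
  unfolding vec_dot_self_eq_0_iff by (simp add: vec_dot_def)

lemma distributed_vec_dot_gauss_vec:
  assumes pos: "0 < vec_dot n a a"
  shows "distributed (gauss_vec n) lborel (vec_dot n a) (normal_density 0 (sqrt (vec_dot n a a)))"
proof -
  interpret prob_space "gauss_vec n"
    by (rule prob_space_gauss_vec)
  define I where "I = {j\<in>{..<n}. a j \<noteq> 0}"
  have nonzero: "\<exists>j<n. a j \<noteq> 0"
    using pos vec_dot_self_eq_0_iff[of n a] by auto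
  then have "0 < n"
    by auto
  have "indep_vars (\<lambda>_. borel) (\<lambda>j g. a j * g j) I"
    using indep_vars_compose2[OF indep_vars_subset[OF indep_vars_gauss_vec_components[OF \<open>0 < n\<close>]],
        of I "\<lambda>j x. a j * x" "\<lambda>_. borel"]
    unfolding I_def by auto
  then have "distributed (gauss_vec n) lborel (\<lambda>g. \<Sum>j\<in>I. a j * g j)
      (normal_density (\<Sum>j\<in>I. 0) (sqrt (\<Sum>j\<in>I. \<bar>a j\<bar>\<^sup>2)))"
    using normal_density_affine[OF distributed_gauss_vec_component, where \<beta> = 0]
    by (intro sum_indep_normal) (auto simp: I_def nonzero)
  moreover have "(\<Sum>j\<in>I. \<bar>a j\<bar>\<^sup>2) = vec_dot n a a"
    unfolding I_def vec_dot_def power2_eq_square abs_mult_self_eq by (rule sum.mono_neutral_left) auto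
  moreover have "(\<lambda>g. \<Sum>j\<in>I. a j * g j) = vec_dot n a"
    unfolding I_def vec_dot_def by (intro ext sum.mono_neutral_left) auto
  ultimately show ?thesis
    by simp
qed

lemma
  shows integrable_vec_dot_sq_gauss_vec: "integrable (gauss_vec n) (\<lambda>g. (vec_dot n a g)\<^sup>2)"
    and integral_vec_dot_sq_gauss_vec: "(\<integral>g. (vec_dot n a g)\<^sup>2 \<partial>gauss_vec n) = vec_dot n a a"
proof -
  have "integrable (gauss_vec n) (\<lambda>g. (vec_dot n a g)\<^sup>2)
      \<and> (\<integral>g. (vec_dot n a g)\<^sup>2 \<partial>gauss_vec n) = vec_dot n a a"
  proof (cases "vec_dot n a a = 0")
    case True
    then show ?thesis
      by (simp add: vec_dot_eq_0_if_self_eq_0)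
  next
    case False
    define \<sigma> where "\<sigma> = sqrt (vec_dot n a a)"
    have \<sigma>: "0 < \<sigma>" "\<sigma>\<^sup>2 = vec_dot n a a"
      using False vec_dot_self_nonneg[of n a] unfolding \<sigma>_def by auto
    have D: "distributed (gauss_vec n) lborel (vec_dot n a) (normal_density 0 \<sigma>)"
      unfolding \<sigma>_def using False vec_dot_self_nonneg[of n a]
      by (intro distributed_vec_dot_gauss_vec) simp
    have "integrable lborel (\<lambda>x. normal_density 0 \<sigma> x * x\<^sup>2)"
      using integrable_normal_moment[of \<sigma> 0 2] \<sigma> by simp
    moreover have "(\<integral>x. normal_density 0 \<sigma> x * x\<^sup>2 \<partial>lborel) = \<sigma>\<^sup>2"
      using integral_normal_moment_even[of \<sigma> 0 1] \<sigma> by (simp add: power2_eq_square)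
    ultimately show ?thesis
      using distributed_integrable[OF D, of "\<lambda>x. x\<^sup>2"] distributed_integral[OF D, of "\<lambda>x. x\<^sup>2"] \<sigma>
      by simp
  qed
  then show "integrable (gauss_vec n) (\<lambda>g. (vec_dot n a g)\<^sup>2)"
    "(\<integral>g. (vec_dot n a g)\<^sup>2 \<partial>gauss_vec n) = vec_dot n a a"
    by auto
qed

lemma
  shows integrable_abs_vec_dot_gauss_vec: "integrable (gauss_vec n) (\<lambda>g. \<bar>vec_dot n a g\<bar>)"
    and integral_abs_vec_dot_gauss_vec:
      "(\<integral>g. \<bar>vec_dot n a g\<bar> \<partial>gauss_vec n) = sqrt (2 / pi) * sqrt (vec_dot n a a)"
proof -
  have "integrable (gauss_vec n) (\<lambda>g. \<bar>vec_dot n a g\<bar>)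
      \<and> (\<integral>g. \<bar>vec_dot n a g\<bar> \<partial>gauss_vec n) = sqrt (2 / pi) * sqrt (vec_dot n a a)"
  proof (cases "vec_dot n a a = 0")
    case True
    then show ?thesis
      by (simp add: vec_dot_eq_0_if_self_eq_0)
  next
    case False
    define \<sigma> where "\<sigma> = sqrt (vec_dot n a a)"
    have \<sigma>: "0 < \<sigma>"
      using False vec_dot_self_nonneg[of n a] unfolding \<sigma>_def by auto
    have D: "distributed (gauss_vec n) lborel (vec_dot n a) (normal_density 0 \<sigma>)"
      unfolding \<sigma>_def using False vec_dot_self_nonneg[of n a]
      by (intro distributed_vec_dot_gauss_vec) simp
    have "integrable lborel (\<lambda>x. normal_density 0 \<sigma> x * \<bar>x\<bar>)"
      using integrable_normal_moment_abs[of \<sigma> 0 1] \<sigma> by simp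
    moreover have "(\<integral>x. normal_density 0 \<sigma> x * \<bar>x\<bar> \<partial>lborel) = \<sigma> * sqrt (2 / pi)"
      using integral_normal_moment_abs_odd[of \<sigma> 0 0] \<sigma> by simp
    ultimately show ?thesis
      using distributed_integrable[OF D, of "\<lambda>x. \<bar>x\<bar>"] distributed_integral[OF D, of "\<lambda>x. \<bar>x\<bar>"]
      unfolding \<sigma>_def by (simp add: mult.commute)
  qed
  then show "integrable (gauss_vec n) (\<lambda>g. \<bar>vec_dot n a g\<bar>)"
    "(\<integral>g. \<bar>vec_dot n a g\<bar> \<partial>gauss_vec n) = sqrt (2 / pi) * sqrt (vec_dot n a a)"
    by auto
qed

lemma
  shows integrable_vec_dot_mult_gauss_vec:
      "integrable (gauss_vec n) (\<lambda>g. vec_dot n a g * vec_dot n b g)"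
    and integral_vec_dot_mult_gauss_vec:
      "(\<integral>g. vec_dot n a g * vec_dot n b g \<partial>gauss_vec n) = vec_dot n a b"
proof -
  define s where "s j = a j + b j" for j
  have polar: "x * y = ((x + y)\<^sup>2 - x\<^sup>2 - y\<^sup>2) / 2" for x y :: real
    by (simp add: power2_eq_square algebra_simps)
  have sum: "vec_dot n s g = vec_dot n a g + vec_dot n b g" for g
    unfolding s_def vec_dot_def by (simp add: distrib_right sum.distrib)
  show "integrable (gauss_vec n) (\<lambda>g. vec_dot n a g * vec_dot n b g)"
    unfolding polar[of "vec_dot n a _"] sum[symmetric]
    by (intro integrable_divide Bochner_Integration.integrable_diff integrable_vec_dot_sq_gauss_vec)
  have "vec_dot n s s = vec_dot n a a + 2 * vec_dot n a b + vec_dot n b b"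
    unfolding s_def vec_dot_def by (simp add: algebra_simps sum.distrib sum_distrib_left)
  then show "(\<integral>g. vec_dot n a g * vec_dot n b g \<partial>gauss_vec n) = vec_dot n a b"
    unfolding polar[of "vec_dot n a _"] sum[symmetric]
    by (simp add: Bochner_Integration.integral_diff Bochner_Integration.integrable_diff
        integrable_vec_dot_sq_gauss_vec integral_vec_dot_sq_gauss_vec)
qed

lemma integrable_sgn_vec_dot_mult:
  assumes "integrable (gauss_vec n) f"
  shows "integrable (gauss_vec n) (\<lambda>g. sgn (vec_dot n a g) * f g)"
proof (rule Bochner_Integration.integrable_bound[OF assms])
  have "f \<in> borel_measurable (gauss_vec n)"
    using assms by (rule borel_measurable_integrable)
  then show "(\<lambda>g. sgn (vec_dot n a g) * f g) \<in> borel_measurable (gauss_vec n)"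
    by measurable
qed (auto simp: abs_mult abs_sgn_eq mult_left_le_one_le)

lemma integrable_gauss_vec_component:
  assumes "k < n"
  shows "integrable (gauss_vec n) (\<lambda>g. g k)"
proof -
  have "integrable (gauss_vec n) (\<lambda>g. \<bar>vec_dot n (mat_id k) g\<bar>)"
    by (rule integrable_abs_vec_dot_gauss_vec)
  then show ?thesis
    using assms integrable_abs_iff[of "\<lambda>g. g k" "gauss_vec n"]
    by (simp add: vec_dot_commute[of n "mat_id k"] vec_dot_mat_id)
qed

lemma abs_add_mult_ge: "\<bar>x\<bar> + t * (sgn x * y) \<le> \<bar>x + t * y\<bar>" for x y t :: real
proof -
  have "\<bar>x\<bar> + t * (sgn x * y) = sgn x * (x + t * y)"
    by (simp add: algebra_simps abs_sgn)
  also have "\<dots> \<le> \<bar>x + t * y\<bar>"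
    by (cases "x > 0"; cases "x < 0") auto
  finally show ?thesis .
qed

lemma
  assumes k: "k < n"
  shows integrable_abs_vec_dot_add_component:
      "integrable (gauss_vec n) (\<lambda>g. \<bar>vec_dot n a g + t * g k\<bar>)"
    and integral_abs_vec_dot_add_component:
      "(\<integral>g. \<bar>vec_dot n a g + t * g k\<bar> \<partial>gauss_vec n)
        = sqrt (2 / pi) * sqrt (vec_dot n a a + 2 * t * a k + t\<^sup>2)"
proof -
  define b where "b j = a j + t * mat_id k j" for j
  have "vec_dot n b g = vec_dot n a g + t * vec_dot n g (mat_id k)" for g
    unfolding b_def vec_dot_def by (simp add: algebra_simps sum.distrib sum_distrib_left)
  then have lin: "vec_dot n b g = vec_dot n a g + t * g k" for g
    using k by (simp add: vec_dot_mat_id)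
  have "vec_dot n b b
      = vec_dot n a a + 2 * t * vec_dot n a (mat_id k) + t\<^sup>2 * vec_dot n (mat_id k) (mat_id k)"
    unfolding b_def vec_dot_def by (simp add: algebra_simps power2_eq_square sum.distrib sum_distrib_left)
  then have sq: "vec_dot n b b = vec_dot n a a + 2 * t * a k + t\<^sup>2"
    using k by (simp add: vec_dot_mat_id mat_id_def)
  show "integrable (gauss_vec n) (\<lambda>g. \<bar>vec_dot n a g + t * g k\<bar>)"
    using integrable_abs_vec_dot_gauss_vec[of n b] unfolding lin .
  show "(\<integral>g. \<bar>vec_dot n a g + t * g k\<bar> \<partial>gauss_vec n)
      = sqrt (2 / pi) * sqrt (vec_dot n a a + 2 * t * a k + t\<^sup>2)"
    using integral_abs_vec_dot_gauss_vec[of n b, unfolded sq, unfolded lin] .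
qed

text \<open>The function \<open>\<phi> t = E |a\<cdot>g + t g\<^sub>k| = sqrt (2/\<pi>) |a + t e\<^sub>k|\<close> is differentiable at
  \<open>0\<close>, and since \<open>sgn\<close> is a subgradient of \<open>|\<cdot>|\<close>, \<open>\<phi> 0 + t E[sgn (a\<cdot>g) g\<^sub>k]\<close> is a supporting
  line of \<open>\<phi>\<close>; so the expectation is \<open>\<phi>' 0\<close>.\<close>
lemma integral_sgn_vec_dot_mult_component:
  assumes pos: "0 < vec_dot n a a" and k: "k < n"
  shows "(\<integral>g. sgn (vec_dot n a g) * g k \<partial>gauss_vec n) = sqrt (2 / pi) * a k / sqrt (vec_dot n a a)"
proof -
  define c where "c = sqrt (2 / pi)"
  define m where "m = (\<integral>g. sgn (vec_dot n a g) * g k \<partial>gauss_vec n)"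
  define \<phi> where "\<phi> t = c * sqrt (vec_dot n a a + 2 * t * a k + t\<^sup>2)" for t
  have \<phi>: "\<phi> t = (\<integral>g. \<bar>vec_dot n a g + t * g k\<bar> \<partial>gauss_vec n)" for t
    unfolding \<phi>_def c_def integral_abs_vec_dot_add_component[OF k] ..
  note integrable = integrable_abs_vec_dot_add_component[OF k] integrable_abs_vec_dot_gauss_vec[of n a]
    integrable_sgn_vec_dot_mult[OF integrable_gauss_vec_component[OF k], of a]
  have supporting: "\<phi> 0 + t * m \<le> \<phi> t" for t
  proof -
    have "\<phi> 0 + t * m
        = (\<integral>g. \<bar>vec_dot n a g\<bar> + t * (sgn (vec_dot n a g) * g k) \<partial>gauss_vec n)"
      unfolding \<phi> m_def using integrable by simp
    also have "\<dots> \<le> \<phi> t"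
      unfolding \<phi> using integrable by (intro integral_mono abs_add_mult_ge) auto
    finally show ?thesis .
  qed
  have "((\<lambda>t. vec_dot n a a + 2 * t * a k + t\<^sup>2) has_real_derivative 2 * a k) (at 0)"
    by (auto intro!: derivative_eq_intros)
  moreover have "(sqrt has_real_derivative inverse (sqrt (vec_dot n a a)) / 2)
      (at (vec_dot n a a + 2 * 0 * a k + 0\<^sup>2))"
    using DERIV_real_sqrt[OF pos] by simp
  ultimately have "(\<phi> has_real_derivative c * (inverse (sqrt (vec_dot n a a)) / 2 * (2 * a k))) (at 0)"
    unfolding \<phi>_def by (intro DERIV_cmult) (rule DERIV_chain2)
  then have "((\<lambda>t. \<phi> t - t * m) has_real_derivative c * a k / sqrt (vec_dot n a a) - m) (at 0)"
    by (auto intro!: derivative_eq_intros simp: field_simps)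
  moreover have "\<forall>t. \<bar>0 - t\<bar> < 1 \<longrightarrow> \<phi> 0 - 0 * m \<le> \<phi> t - t * m"
    using supporting by (auto simp: algebra_simps)
  ultimately have "c * a k / sqrt (vec_dot n a a) - m = 0"
    by (rule DERIV_local_min[OF _ zero_less_one])
  then show ?thesis
    unfolding m_def c_def by simp
qed

lemma
  shows integrable_sgn_vec_dot_mult_vec_dot:
      "integrable (gauss_vec n) (\<lambda>g. sgn (vec_dot n a g) * vec_dot n b g)"
    and integral_sgn_vec_dot_mult_vec_dot:
      "(\<integral>g. sgn (vec_dot n a g) * vec_dot n b g \<partial>gauss_vec n)
        = sqrt (2 / pi) * vec_dot n a b / sqrt (vec_dot n a a)"
proof -
  have "integrable (gauss_vec n) (vec_dot n b)"
    using integrable_abs_vec_dot_gauss_vec[of n b]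
    by (subst integrable_abs_iff[symmetric]) auto
  then show "integrable (gauss_vec n) (\<lambda>g. sgn (vec_dot n a g) * vec_dot n b g)"
    by (rule integrable_sgn_vec_dot_mult)
  show "(\<integral>g. sgn (vec_dot n a g) * vec_dot n b g \<partial>gauss_vec n)
      = sqrt (2 / pi) * vec_dot n a b / sqrt (vec_dot n a a)"
  proof (cases "vec_dot n a a = 0")
    case True
    then show ?thesis
      by (simp add: vec_dot_eq_0_if_self_eq_0)
  next
    case False
    then have pos: "0 < vec_dot n a a"
      using vec_dot_self_nonneg[of n a] by simp
    have integrable: "integrable (gauss_vec n) (\<lambda>g. b k * (sgn (vec_dot n a g) * g k))" if "k < n" for k
      using integrable_sgn_vec_dot_mult[OF integrable_gauss_vec_component[OF that]] by simp
    have "(\<integral>g. sgn (vec_dot n a g) * vec_dot n b g \<partial>gauss_vec n)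
        = (\<integral>g. (\<Sum>k<n. b k * (sgn (vec_dot n a g) * g k)) \<partial>gauss_vec n)"
      unfolding vec_dot_def[of n b] by (simp add: sum_distrib_left mult_ac)
    also have "\<dots> = (\<Sum>k<n. b k * (\<integral>g. sgn (vec_dot n a g) * g k \<partial>gauss_vec n))"
      using integrable by (subst Bochner_Integration.integral_sum) auto
    also have "\<dots> = (\<Sum>k<n. b k * (sqrt (2 / pi) * a k / sqrt (vec_dot n a a)))"
      by (intro sum.cong refl) (simp add: integral_sgn_vec_dot_mult_component[OF pos])
    also have "\<dots> = sqrt (2 / pi) * vec_dot n a b / sqrt (vec_dot n a a)"
      unfolding vec_dot_def[of n a b]
      by (simp add: sum_distrib_left sum_divide_distrib mult_ac)
    finally show ?thesis .
  qed
qed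

text \<open>What remains of the sign \<open>sgn (a\<cdot>g)\<close> after subtracting its \<open>L\<^sup>2\<close>-projection onto
  the linear form \<open>a\<cdot>g\<close>.\<close>
definition sign_residual :: "nat \<Rightarrow> (nat \<Rightarrow> real) \<Rightarrow> (nat \<Rightarrow> real) \<Rightarrow> real" where
  "sign_residual n a g = sgn (vec_dot n a g) - sqrt (2 / pi) * vec_dot n a g / sqrt (vec_dot n a a)"

lemma sign_residual_mult_expand:
  "sign_residual n a g * sign_residual n b g
    = sgn (vec_dot n a g) * sgn (vec_dot n b g)
      - sqrt (2 / pi) / sqrt (vec_dot n b b) * (sgn (vec_dot n a g) * vec_dot n b g)
      - sqrt (2 / pi) / sqrt (vec_dot n a a) * (sgn (vec_dot n b g) * vec_dot n a g)
      + sqrt (2 / pi) * sqrt (2 / pi) / (sqrt (vec_dot n a a) * sqrt (vec_dot n b b))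
        * (vec_dot n a g * vec_dot n b g)"
  unfolding sign_residual_def by (simp add: divide_inverse algebra_simps)

lemma integrable_sgn_mult_sgn_vec_dot:
  "integrable (gauss_vec n) (\<lambda>g. sgn (vec_dot n a g) * sgn (vec_dot n b g))"
proof -
  interpret prob_space "gauss_vec n"
    by (rule prob_space_gauss_vec)
  show ?thesis
    by (rule integrable_const_bound[where B = 1]) (auto simp: abs_mult abs_sgn_eq)
qed

lemma integrable_sign_residual_mult:
  "integrable (gauss_vec n) (\<lambda>g. sign_residual n a g * sign_residual n b g)"
  unfolding sign_residual_mult_expand
  by (intro Bochner_Integration.integrable_add Bochner_Integration.integrable_diff
      integrable_mult_right integrable_sgn_mult_sgn_vec_dot integrable_sgn_vec_dot_mult_vec_dot
      integrable_vec_dot_mult_gauss_vec)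

lemma integral_sgn_mult_sgn_vec_dot:
  "(\<integral>g. sgn (vec_dot n a g) * sgn (vec_dot n b g) \<partial>gauss_vec n)
    = (\<integral>g. sign_residual n a g * sign_residual n b g \<partial>gauss_vec n)
      + 2 / pi * vec_dot n a b / (sqrt (vec_dot n a a) * sqrt (vec_dot n b b))"
proof -
  define c where "c = sqrt (2 / pi)"
  define \<alpha> where "\<alpha> = sqrt (vec_dot n a a)"
  define \<beta> where "\<beta> = sqrt (vec_dot n b b)"
  have "(\<integral>g. sign_residual n a g * sign_residual n b g \<partial>gauss_vec n)
      = (\<integral>g. sgn (vec_dot n a g) * sgn (vec_dot n b g) \<partial>gauss_vec n)
        - c / \<beta> * (c * vec_dot n a b / \<alpha>) - c / \<alpha> * (c * vec_dot n a b / \<beta>)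
        + c * c / (\<alpha> * \<beta>) * vec_dot n a b"
    unfolding sign_residual_mult_expand c_def \<alpha>_def \<beta>_def
    by (simp add: Bochner_Integration.integrable_add Bochner_Integration.integrable_diff
        integrable_sgn_mult_sgn_vec_dot integrable_sgn_vec_dot_mult_vec_dot
        integrable_vec_dot_mult_gauss_vec integral_sgn_vec_dot_mult_vec_dot
        integral_vec_dot_mult_gauss_vec vec_dot_commute[of n b a])
  also have "\<dots> = (\<integral>g. sgn (vec_dot n a g) * sgn (vec_dot n b g) \<partial>gauss_vec n)
      - c * c * vec_dot n a b / (\<alpha> * \<beta>)"
    by (simp add: divide_inverse algebra_simps)
  also have "c * c = 2 / pi"
    unfolding c_def by simp
  finally show ?thesis
    unfolding \<alpha>_def \<beta>_def by simp
qed

lemma integral_sign_residual_sq_le: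
  "(\<integral>g. sign_residual n a g * sign_residual n a g \<partial>gauss_vec n) \<le> 1 - 2 / pi"
proof (cases "vec_dot n a a = 0")
  case True
  then have "sign_residual n a g = 0" for g
    unfolding sign_residual_def by (simp add: vec_dot_eq_0_if_self_eq_0)
  then show ?thesis
    using pi_gt3 by simp
next
  case False
  interpret prob_space "gauss_vec n"
    by (rule prob_space_gauss_vec)
  have "vec_dot n a a / (sqrt (vec_dot n a a) * sqrt (vec_dot n a a)) = 1"
    using False vec_dot_self_nonneg[of n a] by simp
  then have "(\<integral>g. sgn (vec_dot n a g) * sgn (vec_dot n a g) \<partial>gauss_vec n)
      = (\<integral>g. sign_residual n a g * sign_residual n a g \<partial>gauss_vec n) + 2 / pi"
    using integral_sgn_mult_sgn_vec_dot[of n a a] by (simp add: mult.assoc)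
  moreover have "(\<integral>g. sgn (vec_dot n a g) * sgn (vec_dot n a g) \<partial>gauss_vec n) \<le> (\<integral>g. 1 \<partial>gauss_vec n)"
    by (intro integral_mono integrable_sgn_mult_sgn_vec_dot) (auto simp: sgn_if)
  ultimately show ?thesis
    using prob_space by simp
qed

lemma mat_psd_second_moments:
  assumes "\<And>i j. i < n \<Longrightarrow> j < n \<Longrightarrow> integrable M (\<lambda>x. Z i x * Z j x)"
  shows "mat_psd n (\<lambda>i j. \<integral>x. Z i x * Z j x \<partial>M)"
  unfolding mat_psd_def
proof (intro conjI allI impI)
  show "(\<integral>x. Z i x * Z j x \<partial>M) = (\<integral>x. Z j x * Z i x \<partial>M)" for i j
    by (simp add: mult.commute)
  fix v :: "nat \<Rightarrow> real"
  have "(\<Sum>i<n. \<Sum>j<n. v i * (\<integral>x. Z i x * Z j x \<partial>M) * v j)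
      = (\<Sum>i<n. (\<integral>x. (\<Sum>j<n. v i * (Z i x * Z j x) * v j) \<partial>M))"
    using assms by (intro sum.cong refl, subst Bochner_Integration.integral_sum) auto
  also have "\<dots> = (\<integral>x. (\<Sum>i<n. \<Sum>j<n. v i * (Z i x * Z j x) * v j) \<partial>M)"
    using assms by (subst Bochner_Integration.integral_sum) (auto intro!: Bochner_Integration.integrable_sum)
  also have "\<dots> = (\<integral>x. (\<Sum>i<n. v i * Z i x)\<^sup>2 \<partial>M)"
    by (simp add: power2_eq_square sum_distrib_left sum_distrib_right mult_ac)
  also have "\<dots> \<ge> 0"
    by simp
  finally show "0 \<le> (\<Sum>i<n. \<Sum>j<n. v i * (\<integral>x. Z i x * Z j x \<partial>M) * v j)" .
qed

section \<open>The SDP with a bipartite cost matrix\<close>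

lemma sdp_feasible_sign_flip_padding:
  assumes K: "mat_psd n K" and diag: "\<forall>i<n. K i i \<le> \<kappa>" and \<kappa>: "0 < \<kappa>"
    and d: "\<forall>i<n. d i * d i = 1"
  shows "sdp_feasible n (\<lambda>i j. (d i * d j * K i j + (if i = j then \<kappa> - K i i else 0)) / (\<kappa> * real n))"
  unfolding sdp_feasible_def mat_psd_def
proof (intro conjI allI impI)
  show "(d i * d j * K i j + (if i = j then \<kappa> - K i i else 0)) / (\<kappa> * real n)
      = (d j * d i * K j i + (if j = i then \<kappa> - K j j else 0)) / (\<kappa> * real n)"
    if "i < n" "j < n" for i j
    using K that unfolding mat_psd_def by (simp add: mult.commute)
  show "(d i * d i * K i i + (if i = i then \<kappa> - K i i else 0)) / (\<kappa> * real n) = 1 / real n"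
    if "i < n" for i
    using d \<kappa> that by simp
  fix v :: "nat \<Rightarrow> real"
  have flip: "0 \<le> (\<Sum>i<n. \<Sum>j<n. (d i * v i) * K i j * (d j * v j))"
    using K unfolding mat_psd_def by (auto dest: spec[of _ "\<lambda>i. d i * v i"])
  have pad: "0 \<le> (\<Sum>i<n. (\<kappa> - K i i) * (v i * v i))"
    using diag by (intro sum_nonneg mult_nonneg_nonneg[OF _ zero_le_square]) auto
  have "(\<Sum>i<n. \<Sum>j<n. v i * ((d i * d j * K i j + (if i = j then \<kappa> - K i i else 0))
        / (\<kappa> * real n)) * v j)
      = (\<Sum>i<n. \<Sum>j<n. ((d i * v i) * K i j * (d j * v j)
        + (if i = j then (\<kappa> - K i i) * (v i * v j) else 0)) / (\<kappa> * real n))"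
    by (intro sum.cong refl) (auto simp: add_divide_distrib algebra_simps)
  also have "\<dots> = ((\<Sum>i<n. \<Sum>j<n. (d i * v i) * K i j * (d j * v j))
      + (\<Sum>i<n. \<Sum>j<n. if i = j then (\<kappa> - K i i) * (v i * v j) else 0)) / (\<kappa> * real n)"
    by (simp add: sum_divide_distrib[symmetric] sum.distrib add_divide_distrib)
  also have "(\<Sum>i<n. \<Sum>j<n. if i = j then (\<kappa> - K i i) * (v i * v j) else 0)
      = (\<Sum>i<n. (\<kappa> - K i i) * (v i * v i))"
    by (intro sum.cong refl) simp
  finally show "0 \<le> (\<Sum>i<n. \<Sum>j<n. v i * ((d i * d j * K i j + (if i = j then \<kappa> - K i i else 0))
        / (\<kappa> * real n)) * v j)"
    using flip pad \<kappa> by simp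
qed

lemma trace_prod_sign_flip_padding:
  assumes C: "\<forall>i<n. \<forall>j<n. C i j * (d i * d j) = - C i j" and d: "\<forall>i<n. d i * d i = 1"
  shows "mat_trace_prod n C
      (\<lambda>i j. (d i * d j * K i j + (if i = j then \<kappa> - K i i else 0)) / (\<kappa> * real n))
    = - mat_trace_prod n C K / (\<kappa> * real n)"
proof -
  have "C i i = 0" if "i < n" for i
    using C d that by force
  moreover have "C i j * (d j * d i * K j i / (\<kappa> * real n)) = - (C i j * K j i) / (\<kappa> * real n)"
    if "i < n" "j < n" for i j
  proof -
    have "C i j * (d j * d i * K j i / (\<kappa> * real n)) = C i j * (d i * d j) * K j i / (\<kappa> * real n)"
      by (simp add: mult_ac)
    then show ?thesis
      using C that by simp
  qed
  ultimately have "C i j * ((d j * d i * K j i + (if j = i then \<kappa> - K j j else 0)) / (\<kappa> * real n))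
      = - (C i j * K j i) / (\<kappa> * real n)" if "i < n" "j < n" for i j
    using that by (cases "i = j") auto
  then show ?thesis
    unfolding mat_trace_prod_def by (simp add: sum_divide_distrib sum_negf)
qed

lemma sdp_optimal_bipartite_lower_bound:
  assumes opt: "sdp_optimal n C R"
    and C: "\<forall>i<n. \<forall>j<n. C i j * (d i * d j) = - C i j" and d: "\<forall>i<n. d i * d i = 1"
    and K: "mat_psd n K" and diag: "\<forall>i<n. K i i \<le> \<kappa>" and \<kappa>: "0 < \<kappa>"
  shows "- \<kappa> * real n * mat_trace_prod n C R \<le> mat_trace_prod n C K"
proof (cases "n = 0")
  case True
  then show ?thesis
    by (simp add: mat_trace_prod_def)
next
  case False
  then have pos: "0 < \<kappa> * real n"
    using \<kappa> by simp
  have "- mat_trace_prod n C K / (\<kappa> * real n) \<le> mat_trace_prod n C R"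
    using opt sdp_feasible_sign_flip_padding[OF K diag \<kappa> d]
    unfolding sdp_optimal_def trace_prod_sign_flip_padding[OF C d, symmetric] by blast
  then have "(- mat_trace_prod n C K) / (\<kappa> * real n) \<le> mat_trace_prod n C R"
    by simp
  then have "- mat_trace_prod n C K \<le> mat_trace_prod n C R * (\<kappa> * real n)"
    by (rule pos_divide_le_eq[OF pos, THEN iffD1])
  then show ?thesis
    by (simp add: algebra_simps)
qed

lemma block_antidiagonal_sign_flip:
  fixes n :: nat and B C :: real_mat
  assumes "\<forall>i<n. \<forall>j<n. C i j =
        (if i < n div 2 \<and> n div 2 \<le> j then B i (j - n div 2)
         else if n div 2 \<le> i \<and> j < n div 2 then B j (i - n div 2)
         else 0)"
  shows "\<forall>i<n. \<forall>j<n. C i j * ((if i < n div 2 then 1 else -1) * (if j < n div 2 then 1 else -1))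
    = - C i j"
  using assms by auto

section \<open>Expected objective value of the rounding\<close>

definition sign_residual_cov :: "nat \<Rightarrow> real_mat \<Rightarrow> real_mat" where
  "sign_residual_cov n \<rho> i j =
    (\<integral>g. sign_residual n (mat_sqrt n \<rho> i) g * sign_residual n (mat_sqrt n \<rho> j) g \<partial>gauss_vec n)"

lemma mat_psd_sign_residual_cov: "mat_psd n (sign_residual_cov n \<rho>)"
  unfolding sign_residual_cov_def[abs_def]
  by (rule mat_psd_second_moments) (rule integrable_sign_residual_mult)

lemma sign_residual_cov_diag_le: "sign_residual_cov n \<rho> i i \<le> 1 - 2 / pi"
  unfolding sign_residual_cov_def by (rule integral_sign_residual_sq_le)

lemma integral_rounding_objective:
  assumes \<rho>: "mat_psd n \<rho>"
  shows "(\<integral>g. (\<Sum>i<n. \<Sum>j<n. rounding n \<rho> g i * C i j * rounding n \<rho> g j) \<partial>gauss_vec n)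
    = mat_trace_prod n C (sign_residual_cov n \<rho>)
      + 2 / pi * real n * mat_trace_prod n C (\<lambda>i j. \<rho> i j / (real n * sqrt (\<rho> i i * \<rho> j j)))"
proof -
  define S where "S = mat_sqrt n \<rho>"
  have rounding: "rounding n \<rho> g i = sgn (vec_dot n (S i) g)" for g i
    unfolding rounding_def vec_dot_def S_def ..
  have sym: "\<rho> j i = \<rho> i j" if "i < n" "j < n" for i j
    using \<rho> that unfolding mat_psd_def by simp
  have correlation: "(\<integral>g. rounding n \<rho> g i * rounding n \<rho> g j \<partial>gauss_vec n)
      = sign_residual_cov n \<rho> j i
        + real n * (\<rho> j i / (real n * sqrt (\<rho> j j * \<rho> i i))) * (2 / pi)"
    if "i < n" "j < n" for i j
    using that integral_sgn_mult_sgn_vec_dot[of n "S i" "S j"]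
    by (simp add: rounding sign_residual_cov_def S_def vec_dot_mat_sqrt_rows[OF \<rho>] sym
        real_sqrt_mult mult.commute)
  have "(\<integral>g. (\<Sum>i<n. \<Sum>j<n. rounding n \<rho> g i * C i j * rounding n \<rho> g j) \<partial>gauss_vec n)
      = (\<Sum>i<n. \<Sum>j<n. C i j * (\<integral>g. rounding n \<rho> g i * rounding n \<rho> g j \<partial>gauss_vec n))"
    by (simp add: rounding integrable_sgn_mult_sgn_vec_dot Bochner_Integration.integrable_sum mult_ac)
  then show ?thesis
    unfolding mat_trace_prod_def
    by (simp add: correlation sum.distrib sum_distrib_left algebra_simps)
qed

theorem lemma5:
  fixes n :: nat
    and B C \<rho>star \<rho> :: "nat \<Rightarrow> nat \<Rightarrow> real"
  assumes n_even: "even n"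
    and C_block: "\<forall>i<n. \<forall>j<n. C i j =
        (if i < n div 2 \<and> n div 2 \<le> j then B i (j - n div 2)
         else if n div 2 \<le> i \<and> j < n div 2 then B j (i - n div 2)
         else 0)"
    and opt: "sdp_optimal n C \<rho>star"
    and rho_psd: "mat_psd n \<rho>"
    and rho_diag: "\<forall>i<n. \<rho> i i > 0"
  shows "(\<integral>g. (\<Sum>i<n. \<Sum>j<n. rounding n \<rho> g i * C i j * rounding n \<rho> g j) \<partial>gauss_vec n)
     \<ge> 2 / pi * real n * mat_trace_prod n C
          (\<lambda>i j. \<rho> i j / (real n * sqrt (\<rho> i i * \<rho> j j)))
       - (1 - 2 / pi) * real n * mat_trace_prod n C \<rho>star"
proof -
  have "- (1 - 2 / pi) * real n * mat_trace_prod n C \<rho>star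
      \<le> mat_trace_prod n C (sign_residual_cov n \<rho>)"
    using pi_gt3
    by (intro sdp_optimal_bipartite_lower_bound[OF opt block_antidiagonal_sign_flip[OF C_block]]
        mat_psd_sign_residual_cov allI impI sign_residual_cov_diag_le) (auto simp: field_simps)
  then show ?thesis
    unfolding integral_rounding_objective[OF rho_psd] by linarith
qed

end
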